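(* Let $(Q,\rightarrow)$ be a finite transition system, $\mathscr{R}$ a preorder on $Q$ and $\mathscr{P}\subseteq\mathscr{R}$ an equivalence relation. Then the following are equivalent: (i) for all $b,d,d'\in Q$ with $d\,\mathscr{P}\,d'$: $d\in\rightarrow^{-1}(\mathscr{R}(b))\iff d'\in\rightarrow^{-1}(\mathscr{R}(b))$; (ii) $\mathscr{P}\circ\rightarrow^{-1}\subseteq\rightarrow^{-1}\circ\mathscr{R}$.
   Context: For relations $\mathscr{R},\mathscr{S}$ on $Q$: $\mathscr{R}(q)=\{q'\mid q\,\mathscr{R}\,q'\}$, $\mathscr{R}(X)=\bigcup_{q\in X}\mathscr{R}(q)$, $\mathscr{R}^{-1}=\{(y,x)\mid(x,y)\in\mathscr{R}\}$, and $\mathscr{S}\circ\mathscr{R}=\{(x,y)\mid y\in\mathscr{S}(\mathscr{R}(x))\}$. A preorder is a reflexive transitive relation. Condition (i) is what the paper calls $\mathscr{P}$ being $\mathscr{R}$-block-stable; condition (ii) is $\mathscr{P}$ being $\mathscr{R}$-stable. *)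

theory Defs
  imports Main
begin

end

theory Submission
  imports Defs
begin

text \<open>Block-stability says that every predecessor set of an upward-closed set
  \<open>R(b)\<close> is a union of \<open>P\<close>-blocks. Stability yields this by pushing a \<open>P\<close>-step
  back through a transition and absorbing the resulting \<open>R\<close>-step by transitivity;
  conversely, taking \<open>b\<close> to be the target of the transition itself (using
  reflexivity of \<open>R\<close>) recovers stability.\<close>

lemma converse_Image_closed_if_stable:
  assumes stable: "converse T O P \<subseteq> R O converse T" and "trans R"
    and "(d, d') \<in> P" and "d \<in> converse T `` (R `` {b})"
  shows "d' \<in> converse T `` (R `` {b})"
proof -
  from assms(4) obtain w where "(b, w) \<in> R" and "(d, w) \<in> T" by blast
  with \<open>(d, d') \<in> P\<close> have "(w, d') \<in> converse T O P" by blast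
  with stable obtain w' where "(w, w') \<in> R" and "(d', w') \<in> T" by blast
  with \<open>(b, w) \<in> R\<close> \<open>trans R\<close> have "(b, w') \<in> R" by (blast dest: transD)
  with \<open>(d', w') \<in> T\<close> show ?thesis by blast
qed

lemma stable_if_converse_Image_closed:
  assumes closed: "\<And>b d d'. b \<in> Q \<Longrightarrow> (d, d') \<in> P \<Longrightarrow>
      d \<in> converse T `` (R `` {b}) \<Longrightarrow> d' \<in> converse T `` (R `` {b})"
    and "T \<subseteq> Q \<times> Q" and "refl_on Q R"
  shows "converse T O P \<subseteq> R O converse T"
proof
  fix p assume "p \<in> converse T O P"
  then obtain x y z where p: "p = (x, z)" and "(y, x) \<in> T" and "(y, z) \<in> P" by blast
  with assms(2,3) have "x \<in> Q" and "y \<in> converse T `` (R `` {x})"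
    by (auto dest: refl_onD)
  with closed \<open>(y, z) \<in> P\<close> have "z \<in> converse T `` (R `` {x})" by blast
  with p show "p \<in> R O converse T" by blast
qed

theorem lemma2:
  fixes Q :: "'a set" and T R P :: "('a \<times> 'a) set"
  assumes "finite Q"
    and "T \<subseteq> Q \<times> Q"
    and "R \<subseteq> Q \<times> Q" and "refl_on Q R" and "trans R"
    and "equiv Q P" and "P \<subseteq> R"
  shows "(\<forall>b\<in>Q. \<forall>d\<in>Q. \<forall>d'\<in>Q. (d, d') \<in> P \<longrightarrow>
            (d \<in> (converse T) `` (R `` {b}) \<longleftrightarrow> d' \<in> (converse T) `` (R `` {b})))
         \<longleftrightarrow> (converse T O P \<subseteq> R O converse T)"
proof
  assume closed: "\<forall>b\<in>Q. \<forall>d\<in>Q. \<forall>d'\<in>Q. (d, d') \<in> P \<longrightarrow>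
            (d \<in> (converse T) `` (R `` {b}) \<longleftrightarrow> d' \<in> (converse T) `` (R `` {b}))"
  have "P \<subseteq> Q \<times> Q" using \<open>equiv Q P\<close> by (simp add: equiv_def refl_on_def)
  show "converse T O P \<subseteq> R O converse T"
  proof (rule stable_if_converse_Image_closed[OF _ assms(2,4)])
    fix b d d' assume "b \<in> Q" "(d, d') \<in> P" "d \<in> converse T `` (R `` {b})"
    with closed \<open>P \<subseteq> Q \<times> Q\<close> show "d' \<in> converse T `` (R `` {b})" by blast
  qed
next
  assume stable: "converse T O P \<subseteq> R O converse T"
  have "sym P" using \<open>equiv Q P\<close> by (simp add: equiv_def)
  then show "\<forall>b\<in>Q. \<forall>d\<in>Q. \<forall>d'\<in>Q. (d, d') \<in> P \<longrightarrow>
            (d \<in> (converse T) `` (R `` {b}) \<longleftrightarrow> d' \<in> (converse T) `` (R `` {b}))"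
    using converse_Image_closed_if_stable[OF stable \<open>trans R\<close>] by (metis symD)
qed

end
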